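(* Let $M$ be a free $\mathbb{T}$-module with a finite $\mathbb{T}$-basis, $V$ its associated complex vector space, and $(\cdot,\cdot)$ a bicomplex scalar product on $M$ which is hyperbolic positive and closed on $V$. Then for every $\widehat X\in M$ and $k=1,2$, $$P_k\big((\widehat X,\widehat X)\big)=(\widehat X_{\mathbf{e_k}},\widehat X_{\mathbf{e_k}})=\|\widehat X_{\mathbf{e_k}}\|^2 .$$
   Context: Bicomplex numbers: $\mathbb{T}=\{z_1+z_2\mathbf{i_2}: z_1,z_2\in\mathbb{C}(\mathbf{i_1})\}$, $\mathbb{C}(\mathbf{i_1})=\{x+y\mathbf{i_1}: x,y\in\mathbb{R}\}$, $\mathbf{i_1}^2=\mathbf{i_2}^2=-1$, $\mathbf{i_1}\mathbf{i_2}=\mathbf{i_2}\mathbf{i_1}=\mathbf{j}$, $\mathbf{j}^2=1$ (commutative). Hyperbolic numbers $\mathbb{D}=\{x+y\mathbf{j}:x,y\in\mathbb{R}\}$. Idempotents $\mathbf{e_1}=(1+\mathbf{j})/2$, $\mathbf{e_2}=(1-\mathbf{j})/2$. Every $w=z_1+z_2\mathbf{i_2}$ is uniquely $w=(z_1-z_2\mathbf{i_1})\mathbf{e_1}+(z_1+z_2\mathbf{i_1})\mathbf{e_2}$; set $P_1(w)=z_1-z_2\mathbf{i_1}$, $P_2(w)=z_1+z_2\mathbf{i_1}$. Conjugation: $(z_1+z_2\mathbf{i_2})^{\dagger_3}=\overline{z_1}-\overline{z_2}\mathbf{i_2}$. $\mathbb{D}^+=\{a\mathbf{e_1}+b\mathbf{e_2}: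 a,b\ge 0\}$. $M$ has $\mathbb{T}$-basis $\{\widehat m_1,\dots,\widehat m_n\}$, $V=\{\sum x_l\widehat m_l: x_l\in\mathbb{C}(\mathbf{i_1})\}$; for $\widehat X=\sum x_l\widehat m_l$ with $x_l=x_{1l}\mathbf{e_1}+x_{2l}\mathbf{e_2}$, $x_{kl}\in\mathbb{C}(\mathbf{i_1})$, put $\widehat X_{\mathbf{e_k}}=\sum_l x_{kl}\widehat m_l\in V$. A bicomplex scalar product is a map $(\cdot,\cdot):M\times M\to\mathbb{T}$ with: $(\widehat X,\widehat Y_1+\widehat Y_2)=(\widehat X,\widehat Y_1)+(\widehat X,\widehat Y_2)$; $(\widehat X,\alpha\widehat Y)=\alpha(\widehat X,\widehat Y)$ for $\alpha\in\mathbb{T}$; $(\widehat X,\widehat Y)=(\widehat Y,\widehat X)^{\dagger_3}$; $(\widehat X,\widehat X)=0\iff\widehat X=0$. Hyperbolic positive: $(\widehat X,\widehat X)\in\mathbb{D}^+$ for all $\widehat X$. Closed on $V$: $(\widehat X,\widehat Y)\in\mathbb{C}(\mathbf{i_1})$ for $\widehat X,\widehat Y\in V$. For $\widehat Z\in V$, $\|\widehat Z\|=(\widehat Z,\widehat Z)^{1/2}$. *)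

theory Defs
  imports Complex_Main
begin

text \<open>Bicomplex numbers z1 + z2 i2 with z1, z2 in C(i1); C(i1) is the type complex
  (i1 = the complex unit).\<close>
datatype bicomplex = BC (bc1: complex) (bc2: complex)

definition bc_add :: "bicomplex \<Rightarrow> bicomplex \<Rightarrow> bicomplex" where
  "bc_add w v = BC (bc1 w + bc1 v) (bc2 w + bc2 v)"

definition bc_mul :: "bicomplex \<Rightarrow> bicomplex \<Rightarrow> bicomplex" where
  "bc_mul w v = BC (bc1 w * bc1 v - bc2 w * bc2 v) (bc1 w * bc2 v + bc2 w * bc1 v)"

definition bc_zero :: bicomplex where "bc_zero = BC 0 0"

definition bc_of_complex :: "complex \<Rightarrow> bicomplex" where "bc_of_complex z = BC z 0"

text \<open>j = i1 i2, idempotents e1 = (1+j)/2, e2 = (1-j)/2.\<close>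
definition bc_j :: bicomplex where "bc_j = BC 0 \<i>"
definition bc_e1 :: bicomplex where "bc_e1 = BC (1/2) (\<i>/2)"
definition bc_e2 :: bicomplex where "bc_e2 = BC (1/2) (-\<i>/2)"

definition bc_P :: "nat \<Rightarrow> bicomplex \<Rightarrow> complex" where
  "bc_P k w = (if k = 1 then bc1 w - bc2 w * \<i> else bc1 w + bc2 w * \<i>)"

definition bc_dag3 :: "bicomplex \<Rightarrow> bicomplex" where
  "bc_dag3 w = BC (cnj (bc1 w)) (- cnj (bc2 w))"

definition bc_Dplus :: "bicomplex set" where
  "bc_Dplus = {w. \<exists>a b :: real. a \<ge> 0 \<and> b \<ge> 0 \<and>
      w = bc_add (bc_mul (bc_of_complex (complex_of_real a)) bc_e1)
                 (bc_mul (bc_of_complex (complex_of_real b)) bc_e2)}"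

definition bc_hsqrt :: "bicomplex \<Rightarrow> bicomplex" where
  "bc_hsqrt w = bc_add (bc_mul (bc_of_complex (complex_of_real (sqrt (Re (bc_P 1 w))))) bc_e1)
                       (bc_mul (bc_of_complex (complex_of_real (sqrt (Re (bc_P 2 w))))) bc_e2)"

text \<open>The free T-module M with finite basis indexed by the finite type 'n:
  an element is its coordinate vector (x_l)_l.  Module operations.\<close>
definition mod_add :: "('n \<Rightarrow> bicomplex) \<Rightarrow> ('n \<Rightarrow> bicomplex) \<Rightarrow> ('n \<Rightarrow> bicomplex)" where
  "mod_add X Y = (\<lambda>l. bc_add (X l) (Y l))"

definition mod_smult :: "bicomplex \<Rightarrow> ('n \<Rightarrow> bicomplex) \<Rightarrow> ('n \<Rightarrow> bicomplex)" where
  "mod_smult \<alpha> X = (\<lambda>l. bc_mul \<alpha> (X l))"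

definition mod_zero :: "'n \<Rightarrow> bicomplex" where "mod_zero = (\<lambda>l. bc_zero)"

text \<open>The associated C(i1)-vector space V (coordinates in C(i1)).\<close>
definition mod_V :: "('n \<Rightarrow> bicomplex) set" where
  "mod_V = {X. \<forall>l. bc2 (X l) = 0}"

text \<open>X_{e_k} = sum_l x_{kl} m_l, where x_l = x_{1l} e1 + x_{2l} e2.\<close>
definition mod_comp :: "nat \<Rightarrow> ('n \<Rightarrow> bicomplex) \<Rightarrow> ('n \<Rightarrow> bicomplex)" where
  "mod_comp k X = (\<lambda>l. bc_of_complex (bc_P k (X l)))"

definition bc_scalar_product :: "(('n \<Rightarrow> bicomplex) \<Rightarrow> ('n \<Rightarrow> bicomplex) \<Rightarrow> bicomplex) \<Rightarrow> bool" where
  "bc_scalar_product sp \<longleftrightarrow>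
     (\<forall>X Y1 Y2. sp X (mod_add Y1 Y2) = bc_add (sp X Y1) (sp X Y2)) \<and>
     (\<forall>X Y \<alpha>. sp X (mod_smult \<alpha> Y) = bc_mul \<alpha> (sp X Y)) \<and>
     (\<forall>X Y. sp X Y = bc_dag3 (sp Y X)) \<and>
     (\<forall>X. sp X X = bc_zero \<longleftrightarrow> X = mod_zero)"

definition hyperbolic_positive :: "(('n \<Rightarrow> bicomplex) \<Rightarrow> ('n \<Rightarrow> bicomplex) \<Rightarrow> bicomplex) \<Rightarrow> bool" where
  "hyperbolic_positive sp \<longleftrightarrow> (\<forall>X. sp X X \<in> bc_Dplus)"

definition closed_on_V :: "(('n \<Rightarrow> bicomplex) \<Rightarrow> ('n \<Rightarrow> bicomplex) \<Rightarrow> bicomplex) \<Rightarrow> bool" where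
  "closed_on_V sp \<longleftrightarrow> (\<forall>X\<in>mod_V. \<forall>Y\<in>mod_V. bc2 (sp X Y) = 0)"

definition bc_normV :: "(('n \<Rightarrow> bicomplex) \<Rightarrow> ('n \<Rightarrow> bicomplex) \<Rightarrow> bicomplex) \<Rightarrow> ('n \<Rightarrow> bicomplex) \<Rightarrow> bicomplex" where
  "bc_normV sp Z = bc_hsqrt (sp Z Z)"

end

theory Submission
  imports Defs
begin

text \<open>In the idempotent representation w = P1(w) e1 + P2(w) e2 the bicomplex
  operations act componentwise and e1, e2 are fixed by the conjugation dagger_3.
  Writing X = e1 X_e1 + e2 X_e2 and using sesquilinearity, the cross terms carry
  the factor e1 e2 = 0, so (X, Y) has k-th idempotent component P_k((X_ek, Y_ek)).
  For X = Y, closedness on V makes (X_ek, X_ek) a complex number, hence equal to its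
  own P_k.  Hyperbolic positivity makes every (Z, Z) a hyperbolic number with
  nonnegative idempotent components, and squaring the componentwise square root
  gives it back.\<close>

lemma bc_P_add [simp]: "bc_P k (bc_add a b) = bc_P k a + bc_P k b"
  by (simp add: bc_P_def bc_add_def algebra_simps)

lemma bc_P_mul [simp]: "bc_P k (bc_mul a b) = bc_P k a * bc_P k b"
  by (simp add: bc_P_def bc_mul_def algebra_simps)

lemma bc_P_of_complex [simp]: "bc_P k (bc_of_complex z) = z"
  by (simp add: bc_P_def bc_of_complex_def)

lemma bc_P_idempotents [simp]:
  "bc_P k bc_e1 = (if k = 1 then 1 else 0)" "bc_P k bc_e2 = (if k = 1 then 0 else 1)"
  by (simp_all add: bc_P_def bc_e1_def bc_e2_def complex_eq_iff)

lemma bc_dag3_dag3 [simp]: "bc_dag3 (bc_dag3 w) = w"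
  by (cases w) (simp add: bc_dag3_def)

lemma bc_dag3_add [simp]: "bc_dag3 (bc_add a b) = bc_add (bc_dag3 a) (bc_dag3 b)"
  by (simp add: bc_dag3_def bc_add_def)

lemma bc_dag3_mul [simp]: "bc_dag3 (bc_mul a b) = bc_mul (bc_dag3 a) (bc_dag3 b)"
  by (simp add: bc_dag3_def bc_mul_def)

lemma bc_dag3_idempotents [simp]: "bc_dag3 bc_e1 = bc_e1" "bc_dag3 bc_e2 = bc_e2"
  by (simp_all add: bc_dag3_def bc_e1_def bc_e2_def)

lemma bicomplex_eq_iff_bc_P: "w = v \<longleftrightarrow> bc_P 1 w = bc_P 1 v \<and> bc_P 2 w = bc_P 2 v"
proof
  assume "bc_P 1 w = bc_P 1 v \<and> bc_P 2 w = bc_P 2 v"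
  then have "bc1 w = bc1 v" "bc2 w = bc2 v"
    by (auto simp: bc_P_def complex_eq_iff)
  then show "w = v"
    by (simp add: bicomplex.expand)
qed simp

lemma bc_idempotent_decomposition:
  "w = bc_add (bc_mul bc_e1 (bc_of_complex (bc_P 1 w))) (bc_mul bc_e2 (bc_of_complex (bc_P 2 w)))"
  by (simp add: bicomplex_eq_iff_bc_P[of w])

lemma bc_of_complex_bc_P: "bc2 w = 0 \<Longrightarrow> bc_of_complex (bc_P k w) = w"
  by (cases w) (simp add: bc_of_complex_def bc_P_def)

lemma bc_hsqrt_square:
  assumes "w \<in> bc_Dplus"
  shows "bc_mul (bc_hsqrt w) (bc_hsqrt w) = w"
proof -
  obtain a b :: real where "a \<ge> 0" "b \<ge> 0"
    and "w = bc_add (bc_mul (bc_of_complex (complex_of_real a)) bc_e1)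
                    (bc_mul (bc_of_complex (complex_of_real b)) bc_e2)"
    using assms unfolding bc_Dplus_def by blast
  then show ?thesis
    by (simp add: bicomplex_eq_iff_bc_P bc_hsqrt_def flip: of_real_mult)
qed

lemma mod_comp_in_V: "mod_comp k X \<in> mod_V"
  by (simp add: mod_comp_def mod_V_def bc_of_complex_def)

lemma mod_idempotent_decomposition:
  "X = mod_add (mod_smult bc_e1 (mod_comp 1 X)) (mod_smult bc_e2 (mod_comp 2 X))"
  unfolding mod_add_def mod_smult_def mod_comp_def
  by (rule ext) (rule bc_idempotent_decomposition)

lemma bc_scalar_product_add_left:
  assumes "bc_scalar_product sp"
  shows "sp (mod_add Y1 Y2) Z = bc_add (sp Y1 Z) (sp Y2 Z)"
proof -
  have sym: "\<And>X Y. sp X Y = bc_dag3 (sp Y X)"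
    and add: "\<And>X Y1 Y2. sp X (mod_add Y1 Y2) = bc_add (sp X Y1) (sp X Y2)"
    using assms unfolding bc_scalar_product_def by blast+
  show ?thesis
    by (simp add: sym[of "mod_add Y1 Y2"] add sym[of Z])
qed

lemma bc_scalar_product_smult_left:
  assumes "bc_scalar_product sp"
  shows "sp (mod_smult \<alpha> Y) Z = bc_mul (bc_dag3 \<alpha>) (sp Y Z)"
proof -
  have sym: "\<And>X Y. sp X Y = bc_dag3 (sp Y X)"
    and smult: "\<And>X Y \<alpha>. sp X (mod_smult \<alpha> Y) = bc_mul \<alpha> (sp X Y)"
    using assms unfolding bc_scalar_product_def by blast+
  show ?thesis
    by (simp add: sym[of "mod_smult \<alpha> Y"] smult sym[of Z])
qed

lemma bc_P_scalar_product_mod_comp: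
  assumes sp: "bc_scalar_product sp" and k: "k = 1 \<or> k = 2"
  shows "bc_P k (sp X Y) = bc_P k (sp (mod_comp k X) (mod_comp k Y))"
proof -
  have add: "\<And>X Y1 Y2. sp X (mod_add Y1 Y2) = bc_add (sp X Y1) (sp X Y2)"
    and smult: "\<And>X Y \<alpha>. sp X (mod_smult \<alpha> Y) = bc_mul \<alpha> (sp X Y)"
    using sp unfolding bc_scalar_product_def by blast+
  have left: "bc_P k (sp X Z) = bc_P k (sp (mod_comp k X) Z)" for Z
    using k by (subst mod_idempotent_decomposition[of X])
      (auto simp: bc_scalar_product_add_left[OF sp] bc_scalar_product_smult_left[OF sp])
  have right: "bc_P k (sp Z Y) = bc_P k (sp Z (mod_comp k Y))" for Z
    using k by (subst mod_idempotent_decomposition[of Y]) (auto simp: add smult)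
  show ?thesis
    by (simp only: left right)
qed

theorem mainTheorem9:
  fixes sp :: "('n::finite \<Rightarrow> bicomplex) \<Rightarrow> ('n \<Rightarrow> bicomplex) \<Rightarrow> bicomplex"
    and X :: "'n \<Rightarrow> bicomplex"
    and k :: nat
  assumes "bc_scalar_product sp"
    and "hyperbolic_positive sp"
    and "closed_on_V sp"
    and "k = 1 \<or> k = 2"
  shows "bc_of_complex (bc_P k (sp X X)) = sp (mod_comp k X) (mod_comp k X)
       \<and> sp (mod_comp k X) (mod_comp k X)
           = bc_mul (bc_normV sp (mod_comp k X)) (bc_normV sp (mod_comp k X))"
proof
  let ?Xk = "mod_comp k X"
  have "bc2 (sp ?Xk ?Xk) = 0"
    using assms(3) mod_comp_in_V unfolding closed_on_V_def by blast
  then show "bc_of_complex (bc_P k (sp X X)) = sp ?Xk ?Xk"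
    using bc_P_scalar_product_mod_comp[OF assms(1,4)] bc_of_complex_bc_P by metis
  have "sp ?Xk ?Xk \<in> bc_Dplus"
    using assms(2) unfolding hyperbolic_positive_def by blast
  then show "sp ?Xk ?Xk = bc_mul (bc_normV sp ?Xk) (bc_normV sp ?Xk)"
    unfolding bc_normV_def by (simp add: bc_hsqrt_square)
qed

end
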